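(* Let $C\subset\mathbb R^3$ be an embedded curve with nowhere vanishing curvature which lies in a plane $\Pi$, and let $T_0$ be the reflection of $\mathbb R^3$ with respect to $\Pi$. Then $T_0\circ f=\check f$ for every $f\in\mathcal D(C)$.
   Context: $C$ is oriented. A developable strip along $C$ is the germ along $C$ of a $C^\infty$ embedding $f(u,v)=f(u,0)+v\,\xi_f(u)$ with $\mathbf c_f(u)=f(u,0)$ parametrizing $C$, $\xi_f$ unit, and zero Gaussian curvature; with the Frenet frame $(\mathbf e,\mathbf n,\mathbf b)$ of $\mathbf c_f$ write $\xi_f=\cos\beta_f\,\mathbf e+\sin\beta_f(\cos\alpha_f\,\mathbf n+\sin\alpha_f\,\mathbf b)$. $\mathcal D(C)$: strips with $\mathbf c_f$ inducing the orientation of $C$ and $0<|\cos\alpha_f|<1$, normalized by $0<|\alpha_f|<\pi/2$ (first angular function), $0<\beta_f<\pi$; zero Gaussian curvature is equivalent to $\cot\beta_f=(\alpha_f'+|\mathbf c_f'|\tau_f)/(|\mathbf c_f'|\kappa_f\sin\alpha_f)$ ($\kappa_f,\tau_f$ curvature and torsion of $\mathbf c_f$). The dual $\check f$ of $f$ is the (unique germ of) developable strip with $\check f(u,0)=f(u,0)$ and first angular function $-\alpha_f$. *)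

theory Defs
  imports "HOL-Analysis.Analysis" "HOL-Analysis.Cross3"
begin

fun dirder :: "'a::euclidean_space list \<Rightarrow> ('a \<Rightarrow> 'b::real_normed_vector) \<Rightarrow> 'a \<Rightarrow> 'b" where
  "dirder [] f = f"
| "dirder (d # ds) f = (\<lambda>x. frechet_derivative (dirder ds f) (at x) d)"

definition smooth_on :: "'a::euclidean_space set \<Rightarrow> ('a \<Rightarrow> 'b::real_normed_vector) \<Rightarrow> bool" where
  "smooth_on U f \<longleftrightarrow> open U \<and>
     (\<forall>ds. set ds \<subseteq> Basis \<longrightarrow>
        (\<forall>x\<in>U. dirder ds f differentiable (at x)) \<and> continuous_on U (dirder ds f))"

definition tangent :: "(real \<Rightarrow> real^3) \<Rightarrow> real \<Rightarrow> real^3" where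
  "tangent c u = vector_derivative c (at u)"

definition unit_tangent :: "(real \<Rightarrow> real^3) \<Rightarrow> real \<Rightarrow> real^3" where
  "unit_tangent c u = (1 / norm (tangent c u)) *\<^sub>R tangent c u"

definition curvature :: "(real \<Rightarrow> real^3) \<Rightarrow> real \<Rightarrow> real" where
  "curvature c u = norm (vector_derivative (unit_tangent c) (at u)) / norm (tangent c u)"

definition principal_normal :: "(real \<Rightarrow> real^3) \<Rightarrow> real \<Rightarrow> real^3" where
  "principal_normal c u =
     (1 / norm (vector_derivative (unit_tangent c) (at u))) *\<^sub>R vector_derivative (unit_tangent c) (at u)"

definition binormal :: "(real \<Rightarrow> real^3) \<Rightarrow> real \<Rightarrow> real^3" where
  "binormal c u = cross3 (unit_tangent c u) (principal_normal c u)"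

text \<open>The parametrization gam also fixes the orientation of C = gam ` I.\<close>
definition embedded_regular_curve :: "real set \<Rightarrow> (real \<Rightarrow> real^3) \<Rightarrow> bool" where
  "embedded_regular_curve I gam \<longleftrightarrow>
     open I \<and> is_interval I \<and> I \<noteq> {} \<and> smooth_on I gam \<and>
     (\<forall>u\<in>I. tangent gam u \<noteq> 0) \<and> inj_on gam I \<and>
     continuous_on (gam ` I) (inv_into I gam)"

definition pu :: "(real \<times> real \<Rightarrow> real^3) \<Rightarrow> real \<times> real \<Rightarrow> real^3" where
  "pu f p = frechet_derivative f (at p) (1, 0)"

definition pv :: "(real \<times> real \<Rightarrow> real^3) \<Rightarrow> real \<times> real \<Rightarrow> real^3" where
  "pv f p = frechet_derivative f (at p) (0, 1)"

text \<open>Gaussian curvature (L N - M^2)/(E G - F^2) computed with the unit normal;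
  using the non-normalized normal fu x fv this equals the expression below.\<close>
definition gauss_curvature :: "(real \<times> real \<Rightarrow> real^3) \<Rightarrow> real \<times> real \<Rightarrow> real" where
  "gauss_curvature f p =
     (let fu = pu f p; fv = pv f p;
          fuu = pu (pu f) p; fuv = pv (pu f) p; fvv = pv (pv f) p;
          \<nu> = cross3 fu fv;
          E = fu \<bullet> fu; F = fu \<bullet> fv; G = fv \<bullet> fv;
          L = fuu \<bullet> \<nu>; M = fuv \<bullet> \<nu>; N = fvv \<bullet> \<nu>
      in (L * N - M\<^sup>2) / (E * G - F\<^sup>2)\<^sup>2)"

definition base_curve :: "(real \<times> real \<Rightarrow> real^3) \<Rightarrow> real \<Rightarrow> real^3" where
  "base_curve f u = f (u, 0)"

definition ruling :: "(real \<times> real \<Rightarrow> real^3) \<Rightarrow> real \<Rightarrow> real^3" where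
  "ruling f u = vector_derivative (\<lambda>v. f (u, v)) (at 0)"

text \<open>f represents a germ along J x {0} of a developable strip: on some open
  neighbourhood U of J x {0}, f is a C-infinity embedding (injective immersion,
  homeomorphism onto its image) of ruled form f(u,v) = f(u,0) + v xi_f(u) with
  xi_f unit, and with zero Gaussian curvature.\<close>
definition developable_strip :: "real set \<Rightarrow> (real \<times> real \<Rightarrow> real^3) \<Rightarrow> bool" where
  "developable_strip J f \<longleftrightarrow>
     open J \<and> is_interval J \<and> J \<noteq> {} \<and>
     (\<exists>U. open U \<and> J \<times> {0} \<subseteq> U \<and> smooth_on U f \<and> inj_on f U \<and>
          continuous_on (f ` U) (inv_into U f) \<and>
          (\<forall>p\<in>U. cross3 (pu f p) (pv f p) \<noteq> 0) \<and>
          (\<forall>u v. (u, v) \<in> U \<longrightarrow> f (u, v) = f (u, 0) + v *\<^sub>R ruling f u) \<and>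
          (\<forall>u\<in>J. norm (ruling f u) = 1) \<and>
          (\<forall>p\<in>U. gauss_curvature f p = 0))"

definition angular_rep :: "(real \<times> real \<Rightarrow> real^3) \<Rightarrow> real \<Rightarrow> real \<Rightarrow> real \<Rightarrow> bool" where
  "angular_rep f u \<alpha> \<beta> \<longleftrightarrow>
     0 < \<bar>\<alpha>\<bar> \<and> \<bar>\<alpha>\<bar> < pi / 2 \<and> 0 < \<beta> \<and> \<beta> < pi \<and>
     ruling f u = cos \<beta> *\<^sub>R unit_tangent (base_curve f) u +
                  sin \<beta> *\<^sub>R (cos \<alpha> *\<^sub>R principal_normal (base_curve f) u +
                              sin \<alpha> *\<^sub>R binormal (base_curve f) u)"

definition first_angular_function :: "(real \<times> real \<Rightarrow> real^3) \<Rightarrow> real \<Rightarrow> real" where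
  "first_angular_function f u = (THE \<alpha>. \<exists>\<beta>. angular_rep f u \<alpha> \<beta>)"

text \<open>The class D(C) for the oriented curve C = gam ` I: f is a developable strip
  with parameter interval J whose base curve parametrizes C inducing the
  orientation given by gam, and whose ruling admits the normalized angular
  representation (equivalently 0 < |cos alpha_f| < 1).\<close>
definition in_D :: "real set \<Rightarrow> (real \<Rightarrow> real^3) \<Rightarrow> real set \<Rightarrow> (real \<times> real \<Rightarrow> real^3) \<Rightarrow> bool" where
  "in_D I gam J f \<longleftrightarrow>
     developable_strip J f \<and>
     (\<exists>\<phi>. strict_mono_on J \<phi> \<and> \<phi> ` J = I \<and> (\<forall>u\<in>J. base_curve f u = gam (\<phi> u))) \<and>
     (\<forall>u\<in>J. \<exists>\<alpha> \<beta>. angular_rep f u \<alpha> \<beta>)"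

definition is_dual :: "real set \<Rightarrow> (real \<Rightarrow> real^3) \<Rightarrow> real set \<Rightarrow>
    (real \<times> real \<Rightarrow> real^3) \<Rightarrow> (real \<times> real \<Rightarrow> real^3) \<Rightarrow> bool" where
  "is_dual I gam J f g \<longleftrightarrow>
     in_D I gam J g \<and> (\<forall>u\<in>J. g (u, 0) = f (u, 0)) \<and>
     (\<forall>u\<in>J. first_angular_function g u = - first_angular_function f u)"

definition plane :: "real^3 \<Rightarrow> real^3 \<Rightarrow> (real^3) set" where
  "plane p0 N = {x. (x - p0) \<bullet> N = 0}"

definition reflection :: "real^3 \<Rightarrow> real^3 \<Rightarrow> real^3 \<Rightarrow> real^3" where
  "reflection p0 N x = x - (2 * ((x - p0) \<bullet> N) / (N \<bullet> N)) *\<^sub>R N"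

end

(*
  The linear part of the reflection T0 is an orthogonal map that reverses cross products.
  Hence T0 o f is again a ruled, flat embedding, and since T0 fixes the plane of C pointwise,
  T0 o f has the same base curve as f and therefore the same Frenet frame (e, n, b).  As C is
  planar, e and n are parallel to the plane, so T0 fixes them and sends b to -b: the ruling
  cos beta e + sin beta (cos alpha n + sin alpha b) is mapped to the ruling with angles
  (-alpha, beta).  The normalized angles are unique, so the first angular function of T0 o f
  is -alpha_f.
*)
theory Submission
  imports Defs
begin

lemma reflection_fixes_plane: "x \<in> plane p0 N \<Longrightarrow> reflection p0 N x = x"
  unfolding plane_def reflection_def by simp

lemma reflection_reflection:
  assumes "N \<noteq> 0" shows "reflection p0 N (reflection p0 N x) = x"
proof -
  define a where "a = 2 * ((x - p0) \<bullet> N) / (N \<bullet> N)"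
  have "a * (N \<bullet> N) = 2 * ((x - p0) \<bullet> N)" using assms by (simp add: a_def)
  then have "(x - a *\<^sub>R N - p0) \<bullet> N = - ((x - p0) \<bullet> N)"
    by (simp add: inner_diff_left algebra_simps)
  then show ?thesis by (simp add: reflection_def[of p0 N x] flip: a_def) (simp add: reflection_def a_def)
qed

lemma linear_reflection_origin: "linear (reflection 0 N)"
  unfolding reflection_def by (rule linearI) (auto simp: inner_add_left add_divide_distrib algebra_simps)

lemma bounded_linear_reflection_origin: "bounded_linear (reflection 0 N)"
  using linear_reflection_origin linear_conv_bounded_linear by blast

lemma inner_reflection_origin:
  "N \<noteq> 0 \<Longrightarrow> reflection 0 N x \<bullet> reflection 0 N y = x \<bullet> y"
  unfolding reflection_def
  by (simp add: inner_diff_left inner_diff_right inner_commute field_simps power2_eq_square)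

lemma orthogonal_transformation_reflection:
  "N \<noteq> 0 \<Longrightarrow> orthogonal_transformation (reflection 0 N)"
  by (simp add: orthogonal_transformation_def linear_reflection_origin inner_reflection_origin)

lemma cross3_reflection:
  assumes "N \<noteq> 0"
  shows "cross3 (reflection 0 N a) (reflection 0 N b) = - reflection 0 N (cross3 a b)"
proof -
  define k where "k = 2 / (N \<bullet> N)"
  have R: "reflection 0 N x = x - (k * (x \<bullet> N)) *\<^sub>R N" for x
    unfolding reflection_def k_def by simp
  have ident: "(a \<bullet> N) *\<^sub>R cross3 N b + (b \<bullet> N) *\<^sub>R cross3 a N + (cross3 a b \<bullet> N) *\<^sub>R N = (N \<bullet> N) *\<^sub>R cross3 a b"
    by (simp add: cross3_simps forall_3)
  have "cross3 (reflection 0 N a) (reflection 0 N b) = cross3 a b - k *\<^sub>R ((a \<bullet> N) *\<^sub>R cross3 N b + (b \<bullet> N) *\<^sub>R cross3 a N)"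
    unfolding R by (simp add: cross3_simps algebra_simps)
  also have "(a \<bullet> N) *\<^sub>R cross3 N b + (b \<bullet> N) *\<^sub>R cross3 a N = (N \<bullet> N) *\<^sub>R cross3 a b - (cross3 a b \<bullet> N) *\<^sub>R N"
    using ident by (simp add: algebra_simps)
  also have "cross3 a b - k *\<^sub>R ((N \<bullet> N) *\<^sub>R cross3 a b - (cross3 a b \<bullet> N) *\<^sub>R N) = - reflection 0 N (cross3 a b)"
    unfolding R using assms by (simp add: k_def algebra_simps vec_eq_iff)
  finally show ?thesis .
qed

lemma reflection_eq_origin_plus:
  "reflection p0 N x = reflection 0 N x + (2 * (p0 \<bullet> N) / (N \<bullet> N)) *\<^sub>R N"
  unfolding reflection_def by (simp add: inner_diff_left diff_divide_distrib algebra_simps)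

lemma reflection_comp_eq:
  "reflection p0 N \<circ> f = (\<lambda>x. reflection 0 N (f x) + (2 * (p0 \<bullet> N) / (N \<bullet> N)) *\<^sub>R N)"
  by (simp add: fun_eq_iff reflection_eq_origin_plus[of p0 N])

lemma reflection_add: "reflection p0 N (x + y) = reflection p0 N x + reflection 0 N y"
  by (simp only: reflection_eq_origin_plus[of p0 N] linear_add[OF linear_reflection_origin] ac_simps)

lemma continuous_on_reflection: "continuous_on S (reflection p0 N)"
  unfolding reflection_comp_eq[of p0 N id, simplified]
  by (intro continuous_intros linear_continuous_on bounded_linear_reflection_origin)

lemma reflection_angular_combination:
  assumes N: "N \<noteq> 0" and "e \<bullet> N = 0" "n \<bullet> N = 0"
  shows "reflection 0 N (cos \<beta> *\<^sub>R e + sin \<beta> *\<^sub>R (cos \<alpha> *\<^sub>R n + sin \<alpha> *\<^sub>R cross3 e n))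
    = cos \<beta> *\<^sub>R e + sin \<beta> *\<^sub>R (cos (-\<alpha>) *\<^sub>R n + sin (-\<alpha>) *\<^sub>R cross3 e n)"
proof -
  have L: "linear (reflection 0 N)" by (rule linear_reflection_origin)
  have e: "reflection 0 N e = e" and n: "reflection 0 N n = n"
    using assms by (simp_all add: reflection_fixes_plane plane_def)
  have "reflection 0 N (cross3 e n) = - cross3 e n"
    using cross3_reflection[OF N, of e n] unfolding e n by (metis minus_minus)
  then show ?thesis by (simp add: linear_add[OF L] linear_scale[OF L] e n)
qed

lemma smooth_on_differentiable: "smooth_on U f \<Longrightarrow> x \<in> U \<Longrightarrow> f differentiable (at x)"
  unfolding smooth_on_def by (metis dirder.simps(1) empty_set empty_subsetI)

lemma smooth_on_subset: "smooth_on U f \<Longrightarrow> open V \<Longrightarrow> V \<subseteq> U \<Longrightarrow> smooth_on V f"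
  unfolding smooth_on_def by (meson continuous_on_subset subsetD)

lemma dirder_affine_comp:
  fixes f :: "'a::euclidean_space \<Rightarrow> 'b::real_normed_vector"
  assumes f: "smooth_on U f" and L: "bounded_linear L" and ds: "set ds \<subseteq> Basis" and x: "x \<in> U"
  shows "dirder ds (\<lambda>y. L (f y) + c) x = L (dirder ds f x) + (if ds = [] then c else 0)"
  using ds x
proof (induction ds arbitrary: x)
  case Nil
  then show ?case by simp
next
  case (Cons d ds)
  have U: "open U" using f unfolding smooth_on_def by auto
  have "(dirder ds f has_derivative frechet_derivative (dirder ds f) (at x)) (at x)"
    using f Cons.prems unfolding smooth_on_def by (simp add: frechet_derivative_works)
  then have "((\<lambda>y. L (dirder ds f y) + (if ds = [] then c else 0)) has_derivative
      (\<lambda>h. L (frechet_derivative (dirder ds f) (at x) h))) (at x)"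
    by (intro has_derivative_add_const bounded_linear.has_derivative[OF L])
  then have "(dirder ds (\<lambda>y. L (f y) + c) has_derivative
      (\<lambda>h. L (frechet_derivative (dirder ds f) (at x) h))) (at x)"
    by (rule has_derivative_transform_within_open[OF _ U \<open>x \<in> U\<close>]) (use Cons in auto)
  then show ?case by (simp add: frechet_derivative_at[symmetric])
qed

lemma smooth_on_affine_comp:
  fixes f :: "'a::euclidean_space \<Rightarrow> 'b::real_normed_vector"
  assumes f: "smooth_on U f" and L: "bounded_linear L"
  shows "smooth_on U (\<lambda>x. L (f x) + c)"
proof -
  let ?g = "\<lambda>x. L (f x) + c"
  have U: "open U" using f unfolding smooth_on_def by auto
  have "(\<forall>x\<in>U. dirder ds ?g differentiable (at x)) \<and> continuous_on U (dirder ds ?g)"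
    if ds: "set ds \<subseteq> Basis" for ds
  proof -
    define c' where "c' = (if ds = [] then c else 0)"
    have eq: "dirder ds ?g y = L (dirder ds f y) + c'" if "y \<in> U" for y
      using dirder_affine_comp[OF f L ds that] by (simp add: c'_def)
    have d: "\<forall>x\<in>U. dirder ds f differentiable (at x)" and ct: "continuous_on U (dirder ds f)"
      using f ds unfolding smooth_on_def by auto
    have "dirder ds ?g differentiable (at x)" if x: "x \<in> U" for x
    proof -
      have "(\<lambda>y. L (dirder ds f y) + c') differentiable (at x)"
        using d x by (intro differentiable_add differentiable_const
            differentiable_compose[OF bounded_linear_imp_differentiable[OF L]]) auto
      then obtain D where "((\<lambda>y. L (dirder ds f y) + c') has_derivative D) (at x)"
        unfolding differentiable_def by blast
      then have "(dirder ds ?g has_derivative D) (at x)"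
        by (rule has_derivative_transform_within_open[OF _ U x]) (simp add: eq)
      then show ?thesis unfolding differentiable_def by blast
    qed
    moreover have "continuous_on U (\<lambda>y. L (dirder ds f y) + c')"
      by (intro continuous_intros continuous_on_compose2[OF linear_continuous_on[OF L] ct]) auto
    then have "continuous_on U (dirder ds ?g)"
      by (rule continuous_on_cong[THEN iffD1, rotated 2]) (simp_all add: eq)
    ultimately show ?thesis by blast
  qed
  then show ?thesis unfolding smooth_on_def using U by blast
qed

lemma has_vector_derivative_pu:
  assumes "f differentiable (at (a, b))"
  shows "((\<lambda>x. f (x, b)) has_vector_derivative pu f (a, b)) (at a)"
proof -
  have "((\<lambda>x. (x, b)) has_vector_derivative (1, 0)) (at a)"
    by (auto intro!: derivative_eq_intros)
  from vector_derivative_diff_chain_within[OF this has_derivative_at_withinI]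
  show ?thesis using assms by (simp add: pu_def o_def frechet_derivative_works)
qed

lemma has_vector_derivative_pv:
  assumes "f differentiable (at (a, b))"
  shows "((\<lambda>y. f (a, y)) has_vector_derivative pv f (a, b)) (at b)"
proof -
  have "((\<lambda>y. (a, y)) has_vector_derivative (0, 1)) (at b)"
    by (auto intro!: derivative_eq_intros)
  from vector_derivative_diff_chain_within[OF this has_derivative_at_withinI]
  show ?thesis using assms by (simp add: pv_def o_def frechet_derivative_works)
qed

lemma ruling_eq_pv: "f differentiable (at (u, 0)) \<Longrightarrow> ruling f u = pv f (u, 0)"
  unfolding ruling_def by (rule vector_derivative_at[OF has_vector_derivative_pv])

lemma ruling_affine_comp:
  assumes "f differentiable (at (u, 0))" and "bounded_linear L"
  shows "ruling (\<lambda>p. L (f p) + c) u = L (ruling f u)"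
proof -
  have "((\<lambda>v. L (f (u, v)) + c) has_vector_derivative L (pv f (u, 0))) (at 0)"
    unfolding has_vector_derivative_add_const
    by (rule bounded_linear.has_vector_derivative[OF assms(2) has_vector_derivative_pv[OF assms(1)]])
  then have "ruling (\<lambda>p. L (f p) + c) u = L (pv f (u, 0))"
    unfolding ruling_def by (rule vector_derivative_at)
  then show ?thesis by (simp add: ruling_eq_pv[OF assms(1)])
qed

lemma ruling_reflection_comp:
  "smooth_on U f \<Longrightarrow> (u, 0) \<in> U \<Longrightarrow> ruling (reflection p0 N \<circ> f) u = reflection 0 N (ruling f u)"
  unfolding reflection_comp_eq
  by (intro ruling_affine_comp smooth_on_differentiable bounded_linear_reflection_origin)

lemma partial_derivatives_reflection_comp:
  fixes f :: "real \<times> real \<Rightarrow> real^3" and p0 N :: "real^3"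
  assumes "smooth_on U f" and "p \<in> U"
  defines "g \<equiv> reflection p0 N \<circ> f"
  shows "pu g p = reflection 0 N (pu f p)" "pv g p = reflection 0 N (pv f p)"
    "pu (pu g) p = reflection 0 N (pu (pu f) p)" "pv (pu g) p = reflection 0 N (pv (pu f) p)"
    "pv (pv g) p = reflection 0 N (pv (pv f) p)"
proof -
  have "dirder ds g p = reflection 0 N (dirder ds f p)" if "set ds \<subseteq> {(1, 0), (0, 1)}" "ds \<noteq> []" for ds
  proof -
    have "set ds \<subseteq> Basis" using that(1) by (auto simp: Basis_prod_def)
    from dirder_affine_comp[OF assms(1) bounded_linear_reflection_origin this assms(2)] show ?thesis
      using that(2) unfolding g_def reflection_comp_eq by simp
  qed
  from this[of "[(1, 0)]"] this[of "[(0, 1)]"] this[of "[(1, 0), (1, 0)]"]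
    this[of "[(0, 1), (1, 0)]"] this[of "[(0, 1), (0, 1)]"]
  show "pu g p = reflection 0 N (pu f p)" "pv g p = reflection 0 N (pv f p)"
    "pu (pu g) p = reflection 0 N (pu (pu f) p)" "pv (pu g) p = reflection 0 N (pv (pu f) p)"
    "pv (pv g) p = reflection 0 N (pv (pv f) p)"
    by (simp_all add: pu_def[abs_def] pv_def[abs_def])
qed

lemma gauss_curvature_reflection_comp:
  assumes "N \<noteq> 0" "smooth_on U f" "p \<in> U"
  shows "gauss_curvature (reflection p0 N \<circ> f) p = gauss_curvature f p"
  unfolding gauss_curvature_def Let_def partial_derivatives_reflection_comp[OF assms(2,3)]
    cross3_reflection[OF assms(1)]
  by (simp add: inner_reflection_origin[OF assms(1)] inner_minus_right)

lemma continuous_on_inv_into_comp_involution: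
  assumes f: "continuous_on (f ` U) (inv_into U f)" "inj_on f U" and "V \<subseteq> U"
    and T: "continuous_on UNIV T" "\<And>x. T (T x) = x"
  shows "continuous_on ((T \<circ> f) ` V) (inv_into V (T \<circ> f))"
proof -
  have "inj_on (T \<circ> f) V"
    using f(2) \<open>V \<subseteq> U\<close> unfolding inj_on_def by (metis T(2) comp_apply subsetD)
  then have "inv_into V (T \<circ> f) y = inv_into U f (T y)" if "y \<in> (T \<circ> f) ` V" for y
    using that f(2) \<open>V \<subseteq> U\<close> T(2) by (auto simp: subsetD) (metis comp_apply inv_into_f_f)
  moreover have "continuous_on ((T \<circ> f) ` V) (\<lambda>y. inv_into U f (T y))"
    using \<open>V \<subseteq> U\<close> T(2) by (intro continuous_on_compose2[OF f(1) continuous_on_subset[OF T(1)]]) auto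
  ultimately show ?thesis using continuous_on_cong by force
qed

lemma developable_strip_reflection:
  fixes f :: "real \<times> real \<Rightarrow> real^3" and p0 N :: "real^3"
  assumes N: "N \<noteq> 0" and f: "developable_strip J f"
  shows "developable_strip J (reflection p0 N \<circ> f)"
proof -
  let ?T = "reflection p0 N" and ?L = "reflection 0 N"
  define g where "g = ?T \<circ> f"
  have J: "open J" "is_interval J" "J \<noteq> {}" using f unfolding developable_strip_def by auto
  obtain U where U: "open U" "J \<times> {0} \<subseteq> U" and sm: "smooth_on U f" and inj: "inj_on f U"
    and inv: "continuous_on (f ` U) (inv_into U f)"
    and nz: "\<forall>p\<in>U. cross3 (pu f p) (pv f p) \<noteq> 0"
    and ruled: "\<forall>u v. (u, v) \<in> U \<longrightarrow> f (u, v) = f (u, 0) + v *\<^sub>R ruling f u"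
    and unit: "\<forall>u\<in>J. norm (ruling f u) = 1"
    and flat: "\<forall>p\<in>U. gauss_curvature f p = 0"
    using f unfolding developable_strip_def by blast
  \<comment> \<open>Shrink U so that it contains the foot (u, 0) of each of its points: ruling g u is
    only controlled where f is differentiable at (u, 0).\<close>
  define V where "V = U \<inter> (\<lambda>p. (fst p, 0::real)) -` U"
  have V: "open V" "J \<times> {0} \<subseteq> V" "V \<subseteq> U"
    using U unfolding V_def by (auto intro!: open_Int continuous_open_vimage continuous_intros)
  have foot: "(u, 0) \<in> U" if "(u, v) \<in> V" for u v using that unfolding V_def by auto
  have L: "orthogonal_transformation ?L" using N by (rule orthogonal_transformation_reflection)
  have rg: "ruling g u = ?L (ruling f u)" if "(u, 0) \<in> U" for u
    unfolding g_def using sm that by (rule ruling_reflection_comp)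
  have "smooth_on V g"
    unfolding g_def reflection_comp_eq using V
    by (intro smooth_on_subset[OF smooth_on_affine_comp[OF sm]] bounded_linear_reflection_origin)
  moreover have "inj_on g V"
    unfolding g_def using inj_on_subset[OF inj V(3)]
    by (rule comp_inj_on) (metis N injI reflection_reflection inj_on_subset subset_UNIV)
  moreover have "continuous_on (g ` V) (inv_into V g)"
    unfolding g_def using inv inj V(3) continuous_on_reflection reflection_reflection[OF N]
    by (rule continuous_on_inv_into_comp_involution)
  moreover have "\<forall>p\<in>V. cross3 (pu g p) (pv g p) \<noteq> 0"
  proof
    fix p assume "p \<in> V"
    then have "p \<in> U" using V(3) by blast
    then show "cross3 (pu g p) (pv g p) \<noteq> 0" using nz orthogonal_transformation_norm[OF L]
      by (auto simp: g_def partial_derivatives_reflection_comp[OF sm] cross3_reflection[OF N])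
        (metis norm_eq_zero)
  qed
  moreover have "\<forall>u v. (u, v) \<in> V \<longrightarrow> g (u, v) = g (u, 0) + v *\<^sub>R ruling g u"
  proof (intro allI impI)
    fix u v assume uv: "(u, v) \<in> V"
    have "(u, v) \<in> U" using uv V(3) by blast
    then have "f (u, v) = f (u, 0) + v *\<^sub>R ruling f u" using ruled by blast
    then have "g (u, v) = ?T (f (u, 0) + v *\<^sub>R ruling f u)" by (simp add: g_def)
    then show "g (u, v) = g (u, 0) + v *\<^sub>R ruling g u" using rg[OF foot[OF uv]]
      by (simp add: g_def reflection_add orthogonal_transformation_scaleR[OF L])
  qed
  moreover have "\<forall>u\<in>J. norm (ruling g u) = 1"
    using unit U(2) by (auto simp: rg orthogonal_transformation_norm[OF L])
  moreover have "\<forall>p\<in>V. gauss_curvature g p = 0"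
  proof
    fix p assume "p \<in> V"
    then have "p \<in> U" using V(3) by blast
    then show "gauss_curvature g p = 0"
      using flat gauss_curvature_reflection_comp[OF N sm] by (simp add: g_def)
  qed
  ultimately show ?thesis
    unfolding developable_strip_def g_def[symmetric] using J V(1,2)
    by (intro conjI exI[of _ V]) (assumption | fact)+
qed

lemma has_vector_derivative_orthogonal_if_inner_const:
  fixes h :: "real \<Rightarrow> 'a::real_inner"
  assumes h: "(h has_vector_derivative h') (at u)" and S: "open S" "u \<in> S"
    and const: "\<And>x. x \<in> S \<Longrightarrow> h x \<bullet> w = k"
  shows "h' \<bullet> w = 0"
proof -
  have "((\<lambda>x. h x \<bullet> w) has_vector_derivative h' \<bullet> w) (at u)"
    using bounded_linear.has_vector_derivative[OF bounded_linear_inner_left h] .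
  moreover have "((\<lambda>x. h x \<bullet> w) has_vector_derivative 0) (at u)"
    by (rule has_vector_derivative_transform_within_open[OF has_vector_derivative_const S])
      (simp add: const)
  ultimately show ?thesis by (rule vector_derivative_unique_at)
qed

lemma has_vector_derivative_orthogonal_if_unit:
  fixes h :: "real \<Rightarrow> 'a::real_inner"
  assumes h: "(h has_vector_derivative h') (at u)" and S: "open S" "u \<in> S"
    and unit: "\<And>x. x \<in> S \<Longrightarrow> h x \<bullet> h x = 1"
  shows "h' \<bullet> h u = 0"
proof -
  have "((\<lambda>x. h x \<bullet> h x) has_vector_derivative h u \<bullet> h' + h' \<bullet> h u) (at u)"
    by (rule bounded_bilinear.has_vector_derivative[OF bounded_bilinear_inner h h])
  moreover have "((\<lambda>x. h x \<bullet> h x) has_vector_derivative 0) (at u)"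
    by (rule has_vector_derivative_transform_within_open[OF has_vector_derivative_const S])
      (simp add: unit)
  ultimately show ?thesis by (auto dest: vector_derivative_unique_at simp: inner_commute)
qed

lemma unit_tangent_inner_self: "tangent c u \<noteq> 0 \<Longrightarrow> unit_tangent c u \<bullet> unit_tangent c u = 1"
  unfolding unit_tangent_def by (simp add: power2_norm_eq_inner[symmetric] power2_eq_square field_simps)

lemma unit_tangent_differentiable:
  assumes "tangent c differentiable (at u)" and "tangent c u \<noteq> 0"
  shows "unit_tangent c differentiable (at u)"
proof -
  have "(\<lambda>x. norm (tangent c x)) differentiable (at u)"
    by (rule differentiable_compose[of norm, OF differentiable_norm_at[OF assms(2)] assms(1)])
  then show ?thesis
    unfolding unit_tangent_def[abs_def] using assms by (intro differentiable_scaleR differentiable_divide) auto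
qed

lemma principal_normal_inner_self:
  "vector_derivative (unit_tangent c) (at u) \<noteq> 0 \<Longrightarrow> principal_normal c u \<bullet> principal_normal c u = 1"
  unfolding principal_normal_def by (simp add: power2_norm_eq_inner[symmetric] power2_eq_square field_simps)

lemma unit_tangent_derivative_orthogonal:
  assumes "open S" "u \<in> S" "\<forall>x\<in>S. tangent c x \<noteq> 0" "unit_tangent c differentiable (at u)"
  shows "vector_derivative (unit_tangent c) (at u) \<bullet> unit_tangent c u = 0"
  using assms unit_tangent_inner_self
  by (intro has_vector_derivative_orthogonal_if_unit[of _ _ _ S]) (auto simp: vector_derivative_works)

lemma planar_curve_frame:
  assumes S: "open S" "u \<in> S" and c: "\<forall>x\<in>S. c differentiable (at x)"
    and planar: "\<forall>x\<in>S. c x \<bullet> N = k" and e: "unit_tangent c differentiable (at u)"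
  shows "unit_tangent c u \<bullet> N = 0" "vector_derivative (unit_tangent c) (at u) \<bullet> N = 0"
proof -
  have "tangent c x \<bullet> N = 0" if "x \<in> S" for x
    using c that S(1) planar unfolding tangent_def
    by (intro has_vector_derivative_orthogonal_if_inner_const[of c _ x S])
      (auto simp: vector_derivative_works)
  then have "unit_tangent c x \<bullet> N = 0" if "x \<in> S" for x
    using that by (simp add: unit_tangent_def)
  then show "unit_tangent c u \<bullet> N = 0" "vector_derivative (unit_tangent c) (at u) \<bullet> N = 0"
    using S e by (auto intro: has_vector_derivative_orthogonal_if_inner_const simp: vector_derivative_works)
qed

lemma frenet_frame_cong:
  assumes S: "open S" "u \<in> S" and eq: "\<And>x. x \<in> S \<Longrightarrow> c x = d x"
  shows "unit_tangent c u = unit_tangent d u" "principal_normal c u = principal_normal d u"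
    "binormal c u = binormal d u"
proof -
  have local_eq: "vector_derivative g (at x) = vector_derivative h (at x)"
    if "\<And>y. y \<in> S \<Longrightarrow> g y = h y" "x \<in> S" for g h :: "real \<Rightarrow> real^3" and x
    by (intro vector_derivative_cong_eq eventually_mono[OF eventually_nhds_in_open[OF S(1) that(2)]])
      (auto simp: that(1))
  have "unit_tangent c x = unit_tangent d x" if "x \<in> S" for x
    using local_eq[OF eq that] by (simp add: unit_tangent_def tangent_def)
  then show "unit_tangent c u = unit_tangent d u" "principal_normal c u = principal_normal d u"
    "binormal c u = binormal d u"
    using local_eq[of "unit_tangent c" "unit_tangent d" u] S(2)
    by (simp_all add: principal_normal_def binormal_def)
qed

lemma developable_strip_base_curve:
  assumes f: "developable_strip J f"
  shows "\<forall>x\<in>J. base_curve f differentiable (at x)" "\<forall>x\<in>J. tangent (base_curve f) x \<noteq> 0"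
    "\<forall>x\<in>J. unit_tangent (base_curve f) differentiable (at x)"
proof -
  obtain U where J: "open J" and U: "J \<times> {0} \<subseteq> U" and sm: "smooth_on U f"
    and nz: "\<forall>p\<in>U. cross3 (pu f p) (pv f p) \<noteq> 0"
    using f unfolding developable_strip_def by blast
  have foot: "(x, 0) \<in> U" if "x \<in> J" for x using that U by blast
  have base: "(base_curve f has_vector_derivative pu f (x, 0)) (at x)" if "x \<in> J" for x
    using has_vector_derivative_pu[OF smooth_on_differentiable[OF sm foot[OF that]]]
    by (simp add: base_curve_def[abs_def])
  then have tangent: "tangent (base_curve f) x = pu f (x, 0)" if "x \<in> J" for x
    using that unfolding tangent_def by (blast intro: vector_derivative_at)
  show "\<forall>x\<in>J. base_curve f differentiable (at x)"
    using base by (blast intro: differentiableI_vector)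
  have nonzero: "tangent (base_curve f) x \<noteq> 0" if "x \<in> J" for x
    using nz foot[OF that] tangent[OF that] by (metis cross_zero_left)
  then show "\<forall>x\<in>J. tangent (base_curve f) x \<noteq> 0" by blast
  have "set [(1::real, 0::real)] \<subseteq> Basis" by (simp add: Basis_prod_def)
  then have "dirder [(1, 0)] f differentiable (at p)" if "p \<in> U" for p
    using sm that unfolding smooth_on_def by blast
  moreover have "dirder [(1, 0)] f = pu f" by (simp add: fun_eq_iff pu_def)
  ultimately have pu_diff: "pu f differentiable (at p)" if "p \<in> U" for p
    using that by simp
  show "\<forall>x\<in>J. unit_tangent (base_curve f) differentiable (at x)"
  proof
    fix u assume u: "u \<in> J"
    have "(\<lambda>x. pu f (x, 0)) differentiable (at u)"
      using differentiable_compose[of "pu f" "\<lambda>x. (x, 0)" u] pu_diff[OF foot[OF u]] by simp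
    then obtain D where "((\<lambda>x. pu f (x, 0)) has_derivative D) (at u)"
      unfolding differentiable_def by blast
    then have "(tangent (base_curve f) has_derivative D) (at u)"
      by (rule has_derivative_transform_within_open[OF _ J u]) (simp add: tangent)
    then show "unit_tangent (base_curve f) differentiable (at u)"
      using nonzero[OF u] by (intro unit_tangent_differentiable) (auto simp: differentiable_def)
  qed
qed

lemma angular_coordinates_unique:
  fixes e n r :: "real^3"
  assumes ee: "e \<bullet> e = 1" and nn: "n \<bullet> n = 1" and en: "e \<bullet> n = 0"
   and r1: "r = cos \<beta> *\<^sub>R e + sin \<beta> *\<^sub>R (cos \<alpha> *\<^sub>R n + sin \<alpha> *\<^sub>R cross3 e n)"
   and r2: "r = cos \<beta>' *\<^sub>R e + sin \<beta>' *\<^sub>R (cos \<alpha>' *\<^sub>R n + sin \<alpha>' *\<^sub>R cross3 e n)"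
   and a1: "\<bar>\<alpha>\<bar> < pi/2" and a2: "\<bar>\<alpha>'\<bar> < pi/2"
   and b1: "0 < \<beta>" "\<beta> < pi" and b2: "0 < \<beta>'" "\<beta>' < pi"
  shows "\<alpha> = \<alpha>'"
proof -
  let ?b = "cross3 e n"
  have eb: "e \<bullet> ?b = 0" and nb: "n \<bullet> ?b = 0" by (simp_all add: dot_cross_self)
  have "(norm ?b)\<^sup>2 + (e \<bullet> n)\<^sup>2 = (norm e * norm n)\<^sup>2" by (rule norm_cross_dot)
  then have bb: "?b \<bullet> ?b = 1" using ee nn en
    by (simp add: power2_norm_eq_inner[symmetric] power_mult_distrib)
  have ne: "n \<bullet> e = 0" "?b \<bullet> e = 0" "?b \<bullet> n = 0" using en eb nb by (simp_all add: inner_commute)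
  have "r \<bullet> e = cos \<beta>" using r1 ee ne by (simp add: inner_add_left)
  moreover have "r \<bullet> e = cos \<beta>'" using r2 ee ne by (simp add: inner_add_left)
  ultimately have "cos \<beta> = cos \<beta>'" by simp
  then have "arccos (cos \<beta>) = arccos (cos \<beta>')" by simp
  then have bq: "\<beta> = \<beta>'" using b1 b2 by (simp add: arccos_cos)
  have "r \<bullet> ?b = sin \<beta> * sin \<alpha>" using r1 bb eb nb by (simp add: inner_add_left)
  moreover have "r \<bullet> ?b = sin \<beta> * sin \<alpha>'" using r2 bb eb nb bq by (simp add: inner_add_left)
  moreover have "sin \<beta> > 0" using b1 by (simp add: sin_gt_zero)
  ultimately have "sin \<alpha> = sin \<alpha>'" by simp
  then have "arcsin (sin \<alpha>) = arcsin (sin \<alpha>')" by simp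
  then show ?thesis using a1 a2 by (simp add: arcsin_sin)
qed

lemma first_angular_function_eqI:
  assumes f: "developable_strip J f" and u: "u \<in> J" and rep: "angular_rep f u \<alpha> \<beta>"
  shows "first_angular_function f u = \<alpha>"
proof -
  let ?e = "unit_tangent (base_curve f) u"
  let ?e' = "vector_derivative (unit_tangent (base_curve f)) (at u)"
  let ?n = "principal_normal (base_curve f) u"
  have J: "open J" using f unfolding developable_strip_def by blast
  have unit: "norm (ruling f u) = 1" using f u unfolding developable_strip_def by blast
  have regular: "\<forall>x\<in>J. tangent (base_curve f) x \<noteq> 0"
    and e: "unit_tangent (base_curve f) differentiable (at u)"
    using developable_strip_base_curve[OF f] u by blast+
  have ee: "?e \<bullet> ?e = 1" using regular u by (simp add: unit_tangent_inner_self)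
  have e'e: "?e' \<bullet> ?e = 0" by (rule unit_tangent_derivative_orthogonal[OF J u regular e])
  have sin: "sin \<beta> > 0" using rep unfolding angular_rep_def by (simp add: sin_gt_zero)
  have "?e' \<noteq> 0"
  proof
    assume "?e' = 0"
    then have "ruling f u = cos \<beta> *\<^sub>R ?e"
      using rep unfolding angular_rep_def principal_normal_def binormal_def by simp
    then have "\<bar>cos \<beta>\<bar> = 1"
      using unit ee by (simp add: norm_eq_sqrt_inner)
    then have "(cos \<beta>)\<^sup>2 = 1" by (metis power2_abs one_power2)
    then show False using sin sin_cos_squared_add[of \<beta>] by simp
  qed
  then have nn: "?n \<bullet> ?n = 1" by (rule principal_normal_inner_self)
  have en: "?e \<bullet> ?n = 0"
    using e'e by (simp add: principal_normal_def inner_commute)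
  show ?thesis
    unfolding first_angular_function_def
  proof (rule the_equality)
    show "\<exists>\<beta>. angular_rep f u \<alpha> \<beta>" using rep by blast
    show "\<alpha>' = \<alpha>" if "\<exists>\<beta>'. angular_rep f u \<alpha>' \<beta>'" for \<alpha>'
      using that rep unfolding angular_rep_def binormal_def
      by (auto intro: angular_coordinates_unique[OF ee nn en])
  qed
qed

lemma angular_rep_reflection_comp:
  fixes f :: "real \<times> real \<Rightarrow> real^3"
  assumes N: "N \<noteq> 0" and f: "developable_strip J f"
    and planar: "\<forall>x\<in>J. f (x, 0) \<in> plane p0 N" and u: "u \<in> J" and rep: "angular_rep f u \<alpha> \<beta>"
  shows "angular_rep (reflection p0 N \<circ> f) u (-\<alpha>) \<beta>"
proof -
  let ?g = "reflection p0 N \<circ> f"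
  let ?e = "unit_tangent (base_curve f) u"
  let ?n = "principal_normal (base_curve f) u"
  obtain U where J: "open J" and U: "J \<times> {0} \<subseteq> U" and sm: "smooth_on U f"
    using f unfolding developable_strip_def by blast
  have "base_curve ?g x = base_curve f x" if "x \<in> J" for x
    using planar that by (simp add: base_curve_def reflection_fixes_plane)
  then have frame: "unit_tangent (base_curve ?g) u = ?e"
    "principal_normal (base_curve ?g) u = ?n"
    "binormal (base_curve ?g) u = binormal (base_curve f) u"
    using frenet_frame_cong[OF J u, of "base_curve ?g" "base_curve f"] by blast+
  have "\<forall>x\<in>J. base_curve f x \<bullet> N = p0 \<bullet> N"
    using planar by (simp add: base_curve_def plane_def inner_diff_left)
  moreover have "\<forall>x\<in>J. base_curve f differentiable (at x)"
    and "unit_tangent (base_curve f) differentiable (at u)"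
    using developable_strip_base_curve[OF f] u by blast+
  ultimately have "?e \<bullet> N = 0" "vector_derivative (unit_tangent (base_curve f)) (at u) \<bullet> N = 0"
    using planar_curve_frame[OF J u] by blast+
  then have eN: "?e \<bullet> N = 0" and nN: "?n \<bullet> N = 0" by (simp_all add: principal_normal_def)
  have "ruling ?g u = reflection 0 N (ruling f u)"
    using sm U u by (blast intro: ruling_reflection_comp)
  also have "ruling f u = cos \<beta> *\<^sub>R ?e + sin \<beta> *\<^sub>R (cos \<alpha> *\<^sub>R ?n + sin \<alpha> *\<^sub>R cross3 ?e ?n)"
    using rep unfolding angular_rep_def binormal_def by blast
  finally have "ruling ?g u = cos \<beta> *\<^sub>R ?e + sin \<beta> *\<^sub>R (cos (-\<alpha>) *\<^sub>R ?n + sin (-\<alpha>) *\<^sub>R cross3 ?e ?n)"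
    unfolding reflection_angular_combination[OF N eN nN] .
  then show ?thesis
    using rep unfolding angular_rep_def frame binormal_def by simp
qed

theorem lemma4p1:
  fixes gam :: "real \<Rightarrow> real^3" and I J :: "real set"
    and p0 N :: "real^3" and f :: "real \<times> real \<Rightarrow> real^3"
  assumes "embedded_regular_curve I gam"
    and "\<forall>u\<in>I. curvature gam u \<noteq> 0"
    and "N \<noteq> 0"
    and "gam ` I \<subseteq> plane p0 N"
    and "in_D I gam J f"
  shows "is_dual I gam J f (reflection p0 N \<circ> f)"
proof -
  let ?g = "reflection p0 N \<circ> f"
  obtain \<phi> where f: "developable_strip J f" and \<phi>: "strict_mono_on J \<phi>" "\<phi> ` J = I"
    and base: "\<forall>u\<in>J. base_curve f u = gam (\<phi> u)" and reps: "\<forall>u\<in>J. \<exists>\<alpha> \<beta>. angular_rep f u \<alpha> \<beta>"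
    using assms(5) unfolding in_D_def by blast
  have planar: "\<forall>u\<in>J. f (u, 0) \<in> plane p0 N"
    using base \<phi>(2) assms(4) unfolding base_curve_def by blast
  then have fixed: "\<forall>u\<in>J. ?g (u, 0) = f (u, 0)" by (simp add: reflection_fixes_plane)
  have angles: "(\<exists>\<alpha> \<beta>. angular_rep ?g u \<alpha> \<beta>) \<and>
      first_angular_function ?g u = - first_angular_function f u" if "u \<in> J" for u
  proof -
    obtain \<alpha> \<beta> where rep: "angular_rep f u \<alpha> \<beta>" using reps \<open>u \<in> J\<close> by blast
    then have rep': "angular_rep ?g u (-\<alpha>) \<beta>"
      using angular_rep_reflection_comp[OF assms(3) f planar \<open>u \<in> J\<close>] by blast
    with developable_strip_reflection[OF assms(3) f] show ?thesis
      using first_angular_function_eqI[OF f \<open>u \<in> J\<close> rep] first_angular_function_eqI[OF _ \<open>u \<in> J\<close> rep'] by auto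
  qed
  show ?thesis
    unfolding is_dual_def in_D_def
    using developable_strip_reflection[OF assms(3) f] \<phi> base fixed angles
    by (auto simp: base_curve_def)
qed

end
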